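(* Let $A,B$ be Pareto sets of size $n$ each, sorted lexicographically, with Minkowski matrix $M_{ij}=A_i+B_j$, and let a query range $R=[x_{\min},x_{\max})\times[y_{\min},y_{\max})$ be given. The sweep procedure returns the lexicographically smallest entry of $M$ lying in $R$ (or reports that none exists), and it runs in $\mathcal{O}(n)$ time.
   Context: A Pareto set is a set $S\subset\mathbb{R}^2$ in which no point dominates another ($p$ dominates $p'$ if $p\ne p'$, $p.x\le p'.x$, $p.y\le p'.y$); sorted lexicographically, its $x$-coordinates strictly increase and $y$-coordinates strictly decrease, so for $s\ge i$, $t\ge j$ the entry $M_{st}$ has $x$-coordinate at least and $y$-coordinate at most those of $M_{ij}$. Entries of $M$ are computed on demand. The sweep procedure: keep a current candidate (initially none) and a current row index $i$, starting at $i=n$ in column $1$. For columns $j=1,\dots,n$ in order: starting at row $i$ of column $j$, move upward (decrease $i$) by linear search as long as $i\ge 2$ and the entry $M_{i-1,j}$ still satisfies $x\ge x_{\min}$ and $y<y_{\max}$ (no movement if $M_{ij}$ itself violates $x\ge x_{\min}$ or $y<y_{\max}$); then if $M_{ij}\in R$ and it is lexicographically smaller than the current candidate (or there is no candidate yet), make it the candidate; then proceed to column $j+1$ keeping the same row index $i$. After the last column, return the candidate. *)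

theory Defs
  imports Complex_Main "HOL-Library.Product_Lexorder"
begin

text \<open>Points of the plane: pairs of reals. With Product_Lexorder, the order on
  real \<times> real is the lexicographic order.\<close>
type_synonym point = "real \<times> real"

definition dominates :: "point \<Rightarrow> point \<Rightarrow> bool" where
  "dominates p p' \<longleftrightarrow> p \<noteq> p' \<and> fst p \<le> fst p' \<and> snd p \<le> snd p'"

definition pareto :: "point set \<Rightarrow> bool" where
  "pareto S \<longleftrightarrow> (\<forall>p\<in>S. \<forall>p'\<in>S. \<not> dominates p p')"

text \<open>A Pareto set of size n, sorted lexicographically, given as a list
  (0-based: entry i of the list is A_{i+1} of the paper).\<close>
definition sorted_pareto :: "nat \<Rightarrow> point list \<Rightarrow> bool" where
  "sorted_pareto n A \<longleftrightarrow> length A = n \<and> sorted_wrt (<) A \<and> pareto (set A)"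

definition mink :: "point list \<Rightarrow> point list \<Rightarrow> nat \<Rightarrow> nat \<Rightarrow> point" where
  "mink A B i j = (fst (A ! i) + fst (B ! j), snd (A ! i) + snd (B ! j))"

definition in_range :: "real \<Rightarrow> real \<Rightarrow> real \<Rightarrow> real \<Rightarrow> point \<Rightarrow> bool" where
  "in_range xmin xmax ymin ymax p \<longleftrightarrow>
     xmin \<le> fst p \<and> fst p < xmax \<and> ymin \<le> snd p \<and> snd p < ymax"

definition walk_ok :: "real \<Rightarrow> real \<Rightarrow> point \<Rightarrow> bool" where
  "walk_ok xmin ymax p \<longleftrightarrow> xmin \<le> fst p \<and> snd p < ymax"

text \<open>Upward linear search in one column (0-based row index i; the paper's
  condition i \<ge> 2 becomes i > 0). Returns the final row together with the
  number of loop iterations executed (each iteration inspects O(1) entries).\<close>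
fun walk :: "(nat \<Rightarrow> point) \<Rightarrow> real \<Rightarrow> real \<Rightarrow> nat \<Rightarrow> nat \<times> nat" where
  "walk col xmin ymax i =
     (if 0 < i \<and> walk_ok xmin ymax (col i) \<and> walk_ok xmin ymax (col (i - 1))
      then (let (i', c) = walk col xmin ymax (i - 1) in (i', Suc c))
      else (i, 1))"

text \<open>Sweep state: (candidate, current row, accumulated step count).
  Processing column j: walk up, then possibly update the candidate
  (one more unit of work).\<close>
definition sweep_col ::
  "point list \<Rightarrow> point list \<Rightarrow> real \<Rightarrow> real \<Rightarrow> real \<Rightarrow> real \<Rightarrow> nat
   \<Rightarrow> point option \<times> nat \<times> nat \<Rightarrow> point option \<times> nat \<times> nat" where
  "sweep_col A B xmin xmax ymin ymax j st =
     (case st of (cand, i, t) \<Rightarrow>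
        (case walk (\<lambda>r. mink A B r j) xmin ymax i of (i', c) \<Rightarrow>
           (let p = mink A B i' j;
                cand' = (if in_range xmin xmax ymin ymax p \<and>
                            (case cand of None \<Rightarrow> True | Some q \<Rightarrow> p < q)
                         then Some p else cand)
            in (cand', i', t + c + 1))))"

text \<open>The full sweep: start with no candidate at the last row (n-1, i.e. row n
  of the paper), process columns 0..n-1 in order.\<close>
definition sweep_state ::
  "nat \<Rightarrow> point list \<Rightarrow> point list \<Rightarrow> real \<Rightarrow> real \<Rightarrow> real \<Rightarrow> real
   \<Rightarrow> point option \<times> nat \<times> nat" where
  "sweep_state n A B xmin xmax ymin ymax =
     fold (sweep_col A B xmin xmax ymin ymax) [0..<n] (None, n - 1, 0)"

definition sweep ::
  "nat \<Rightarrow> point list \<Rightarrow> point list \<Rightarrow> real \<Rightarrow> real \<Rightarrow> real \<Rightarrow> real \<Rightarrow> point option" where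
  "sweep n A B xmin xmax ymin ymax = fst (sweep_state n A B xmin xmax ymin ymax)"

definition sweep_time ::
  "nat \<Rightarrow> point list \<Rightarrow> point list \<Rightarrow> real \<Rightarrow> real \<Rightarrow> real \<Rightarrow> real \<Rightarrow> nat" where
  "sweep_time n A B xmin xmax ymin ymax = snd (snd (sweep_state n A B xmin xmax ymin ymax))"

definition entries_in_range ::
  "nat \<Rightarrow> point list \<Rightarrow> point list \<Rightarrow> real \<Rightarrow> real \<Rightarrow> real \<Rightarrow> real \<Rightarrow> point set" where
  "entries_in_range n A B xmin xmax ymin ymax =
     {p. \<exists>i<n. \<exists>j<n. p = mink A B i j \<and> in_range xmin xmax ymin ymax p}"

end

theory Submission
  imports Defs
begin

text \<open>Going down a column of the Minkowski matrix, x strictly increases and y decreases,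
  and the same holds going right along a row. Hence the entries with x \<ge> xmin and y < ymax
  form a final segment of rows in every column, and this segment only grows from one column
  to the next. Every entry of R lies in that segment, and if a column meets R at all then
  the first row of the segment does too: it has the smallest x of the segment, so x < xmax,
  and the largest y, so y \<ge> ymin. It is therefore the lexicographic minimum of the column
  within R. The row pointer of the sweep always lies in the segment of every later column
  meeting R, and whenever it lies in the segment of the current column the walk moves it to
  the first row of that segment. The pointer only moves up, so there are at most n - 1 upward
  steps in total: after j columns the step count t and the row i satisfy t + i = n - 1 + 2j.\<close>

definition min_opt :: "'a::linorder set \<Rightarrow> 'a option" where
  "min_opt X = (if X = {} then None else Some (Min X))"

lemma min_opt_Un_update:
  fixes X Y :: "'a::linorder set"
  assumes "finite X" "finite Y" "b \<longleftrightarrow> Y \<noteq> {}" "Y \<noteq> {} \<Longrightarrow> p = Min Y"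
  shows "(if b \<and> (case min_opt X of None \<Rightarrow> True | Some q \<Rightarrow> p < q) then Some p else min_opt X)
           = min_opt (X \<union> Y)"
proof (cases "X = {} \<or> Y = {}")
  case True
  with assms show ?thesis
    by (auto simp: min_opt_def)
next
  case False
  then have "Min (X \<union> Y) = min (Min X) p"
    using assms Min_Un[OF assms(1) _ assms(2)] by simp
  with False assms(3) show ?thesis
    by (auto simp: min_opt_def min_def)
qed

lemma sorted_pareto_nth_less:
  assumes "sorted_pareto n A" "i < i'" "i' < n"
  shows "fst (A ! i) < fst (A ! i') \<and> snd (A ! i') < snd (A ! i)"
proof -
  have lt: "A ! i < A ! i'" and "A ! i \<in> set A" "A ! i' \<in> set A"
    using assms by (auto simp: sorted_pareto_def sorted_wrt_iff_nth_less)
  then have "\<not> dominates (A ! i) (A ! i')"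
    using assms(1) by (auto simp: sorted_pareto_def pareto_def)
  with lt show ?thesis
    by (auto simp: dominates_def less_prod_def)
qed

lemma sorted_pareto_nth_le:
  assumes "sorted_pareto n A" "i \<le> i'" "i' < n"
  shows "fst (A ! i) \<le> fst (A ! i') \<and> snd (A ! i') \<le> snd (A ! i)"
  using assms sorted_pareto_nth_less[OF assms(1), of i i'] by (cases "i = i'") auto

lemma walk_ok_if_in_range: "in_range xmin xmax ymin ymax p \<Longrightarrow> walk_ok xmin ymax p"
  by (simp add: in_range_def walk_ok_def)

declare walk.simps [simp del]

lemma walk_stop:
  assumes "\<not> (0 < i \<and> walk_ok xmin ymax (col i) \<and> walk_ok xmin ymax (col (i - 1)))"
  shows "walk col xmin ymax i = (i, 1)"
  by (simp only: walk.simps[of col xmin ymax i] if_not_P[OF assms])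

lemma walk_step:
  assumes "0 < i \<and> walk_ok xmin ymax (col i) \<and> walk_ok xmin ymax (col (i - 1))"
  shows "walk col xmin ymax i = (fst (walk col xmin ymax (i - 1)), Suc (snd (walk col xmin ymax (i - 1))))"
  by (simp only: walk.simps[of col xmin ymax i] if_P[OF assms]) (simp add: case_prod_beta)

lemma walk_cost:
  "fst (walk col xmin ymax i) \<le> i \<and> snd (walk col xmin ymax i) = i - fst (walk col xmin ymax i) + 1"
proof (induction col xmin ymax i rule: walk.induct)
  case (1 col xmin ymax i)
  show ?case
  proof (cases "0 < i \<and> walk_ok xmin ymax (col i) \<and> walk_ok xmin ymax (col (i - 1))")
    case True
    with "1.IH" show ?thesis
      unfolding walk_step[OF True] by auto
  qed (simp add: walk_stop)
qed

lemma walk_Least: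
  assumes "\<And>r r'. r \<le> r' \<Longrightarrow> r' \<le> i \<Longrightarrow> walk_ok xmin ymax (col r) \<Longrightarrow> walk_ok xmin ymax (col r')"
    and "walk_ok xmin ymax (col i)"
  shows "fst (walk col xmin ymax i) = (LEAST r. walk_ok xmin ymax (col r))"
  using assms
proof (induction col xmin ymax i rule: walk.induct)
  case (1 col xmin ymax i)
  show ?case
  proof (cases "0 < i \<and> walk_ok xmin ymax (col (i - 1))")
    case True
    with "1.prems"(2) have step: "0 < i \<and> walk_ok xmin ymax (col i) \<and> walk_ok xmin ymax (col (i - 1))"
      by simp
    have "fst (walk col xmin ymax (i - 1)) = (LEAST r. walk_ok xmin ymax (col r))"
      using "1.prems"(1) step by (intro "1.IH"[OF step]) auto
    then show ?thesis
      by (simp add: walk_step[OF step])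
  next
    case False
    have "i \<le> r" if "walk_ok xmin ymax (col r)" for r
    proof (rule ccontr)
      assume "\<not> i \<le> r"
      then have "walk_ok xmin ymax (col (i - 1))"
        using "1.prems"(1)[of r "i - 1"] that by simp
      with False \<open>\<not> i \<le> r\<close> show False
        by simp
    qed
    with False "1.prems"(2) show ?thesis
      by (simp add: walk_stop Least_equality)
  qed
qed

locale pareto_sweep =
  fixes n :: nat and A B :: "point list" and xmin xmax ymin ymax :: real
  assumes n_pos: "1 \<le> n"
    and pareto_A: "sorted_pareto n A"
    and pareto_B: "sorted_pareto n B"
begin

abbreviation ok :: "nat \<Rightarrow> nat \<Rightarrow> bool" where
  "ok j i \<equiv> walk_ok xmin ymax (mink A B i j)"

abbreviation R :: "point \<Rightarrow> bool" where
  "R \<equiv> in_range xmin xmax ymin ymax"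

definition col_entries :: "nat \<Rightarrow> point set" where
  "col_entries j = {p. \<exists>i<n. p = mink A B i j \<and> R p}"

definition entries_before :: "nat \<Rightarrow> point set" where
  "entries_before j = (\<Union>j'<j. col_entries j')"

definition first_ok_row :: "nat \<Rightarrow> nat" where
  "first_ok_row j = (LEAST i. ok j i)"

lemma finite_col_entries: "finite (col_entries j)"
  by (rule finite_subset[of _ "(\<lambda>i. mink A B i j) ` {..<n}"]) (auto simp: col_entries_def)

lemma finite_entries_before: "finite (entries_before j)"
  by (simp add: entries_before_def finite_col_entries)

lemma entries_before_Suc: "entries_before (Suc j) = entries_before j \<union> col_entries j"
  by (auto simp: entries_before_def lessThan_Suc)

lemma entries_before_n: "entries_before n = entries_in_range n A B xmin xmax ymin ymax"
  by (auto simp: entries_before_def col_entries_def entries_in_range_def)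

lemma mink_mono:
  assumes "i \<le> i'" "i' < n" "j \<le> j'" "j' < n"
  shows "fst (mink A B i j) \<le> fst (mink A B i' j') \<and> snd (mink A B i' j') \<le> snd (mink A B i j)"
  using sorted_pareto_nth_le[OF pareto_A, of i i'] sorted_pareto_nth_le[OF pareto_B, of j j'] assms
  by (auto simp: mink_def)

lemma mink_fst_strict_mono: "i < i' \<Longrightarrow> i' < n \<Longrightarrow> fst (mink A B i j) < fst (mink A B i' j)"
  using sorted_pareto_nth_less[OF pareto_A, of i i'] by (auto simp: mink_def)

lemma ok_mono: "ok j i \<Longrightarrow> i \<le> i' \<Longrightarrow> i' < n \<Longrightarrow> j \<le> j' \<Longrightarrow> j' < n \<Longrightarrow> ok j' i'"
  using mink_mono[of i i' j j'] by (auto simp: walk_ok_def)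

lemma ok_last_row:
  assumes "col_entries j \<noteq> {}" "j < n"
  shows "ok j (n - 1)"
proof -
  obtain i where "i < n" "R (mink A B i j)"
    using assms(1) by (auto simp: col_entries_def)
  with assms(2) show ?thesis
    using ok_mono[of i j "n - 1" j] walk_ok_if_in_range by simp
qed

lemma walk_first_ok_row:
  "ok j i \<Longrightarrow> i < n \<Longrightarrow> j < n \<Longrightarrow> fst (walk (\<lambda>r. mink A B r j) xmin ymax i) = first_ok_row j"
  unfolding first_ok_row_def by (rule walk_Least) (auto intro: ok_mono)

lemma first_ok_row_le: "ok j i \<Longrightarrow> first_ok_row j \<le> i"
  unfolding first_ok_row_def by (rule Least_le)

lemma Min_col_entries:
  assumes "col_entries j \<noteq> {}" "j < n"
  shows "R (mink A B (first_ok_row j) j) \<and> Min (col_entries j) = mink A B (first_ok_row j) j"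
proof -
  let ?r = "first_ok_row j"
  obtain i where i: "i < n" "R (mink A B i j)"
    using assms(1) by (auto simp: col_entries_def)
  have "ok j i"
    using i(2) by (rule walk_ok_if_in_range)
  then have "ok j ?r"
    unfolding first_ok_row_def by (rule LeastI)
  moreover have "?r \<le> i"
    using \<open>ok j i\<close> by (rule first_ok_row_le)
  ultimately have R_first: "R (mink A B ?r j)"
    using i mink_mono[of ?r i j j] assms(2) by (auto simp: in_range_def walk_ok_def)
  have "mink A B ?r j \<le> p" if p: "p \<in> col_entries j" for p
  proof -
    obtain i' where i': "i' < n" "p = mink A B i' j" "R p"
      using p unfolding col_entries_def by blast
    then have "?r \<le> i'"
      using walk_ok_if_in_range first_ok_row_le by blast
    with i' show ?thesis
      using mink_fst_strict_mono[of ?r i' j] by (cases "?r = i'") (auto simp: less_eq_prod_def)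
  qed
  moreover have "mink A B ?r j \<in> col_entries j"
    unfolding col_entries_def using R_first \<open>?r \<le> i\<close> i(1) le_less_trans by blast
  ultimately show ?thesis
    using R_first by (simp add: Min_eqI finite_col_entries)
qed

definition sweep_inv :: "nat \<Rightarrow> point option \<times> nat \<times> nat \<Rightarrow> bool" where
  "sweep_inv j = (\<lambda>(cand, i, t). i < n \<and> t + i = n - 1 + 2 * j
     \<and> (\<forall>j' \<in> {j..<n}. col_entries j' \<noteq> {} \<longrightarrow> ok j' i)
     \<and> cand = min_opt (entries_before j))"

lemma sweep_inv_init: "sweep_inv 0 (None, n - 1, 0)"
proof -
  have "\<forall>j \<in> {0..<n}. col_entries j \<noteq> {} \<longrightarrow> ok j (n - 1)"
    using ok_last_row by simp
  with n_pos show ?thesis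
    unfolding sweep_inv_def by (simp add: entries_before_def min_opt_def)
qed

lemma sweep_inv_step:
  assumes inv: "sweep_inv j (cand, i, t)" and j: "j < n"
  shows "sweep_inv (Suc j) (sweep_col A B xmin xmax ymin ymax j (cand, i, t))"
proof -
  obtain i' k where walk: "walk (\<lambda>r. mink A B r j) xmin ymax i = (i', k)"
    by fastforce
  have i: "i < n" and t: "t + i = n - 1 + 2 * j"
    and later: "\<forall>j' \<in> {j..<n}. col_entries j' \<noteq> {} \<longrightarrow> ok j' i"
    and cand: "cand = min_opt (entries_before j)"
    using inv by (auto simp: sweep_inv_def)
  have "i' \<le> i" and k: "k = i - i' + 1"
    using walk_cost[of "\<lambda>r. mink A B r j" xmin ymax i] walk by auto
  have new_row: "i' = (if ok j i then first_ok_row j else i)"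
    using walk walk_first_ok_row[OF _ i j] walk_stop[where col = "\<lambda>r. mink A B r j"] by auto
  have "i' < n"
    using \<open>i' \<le> i\<close> i by simp
  have col_hit: "col_entries j \<noteq> {} \<Longrightarrow> R (mink A B i' j) \<and> Min (col_entries j) = mink A B i' j"
    using later j new_row Min_col_entries by auto
  have "R (mink A B i' j) \<longleftrightarrow> col_entries j \<noteq> {}"
    using col_hit \<open>i' < n\<close> unfolding col_entries_def by blast
  then have cand':
    "(if R (mink A B i' j) \<and> (case cand of None \<Rightarrow> True | Some q \<Rightarrow> mink A B i' j < q)
      then Some (mink A B i' j) else cand) = min_opt (entries_before (Suc j))"
    unfolding cand entries_before_Suc
    using col_hit by (intro min_opt_Un_update) (auto simp: finite_col_entries finite_entries_before)
  have "\<forall>j' \<in> {Suc j..<n}. col_entries j' \<noteq> {} \<longrightarrow> ok j' i'"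
  proof (cases "ok j i")
    case True
    then have "ok j (first_ok_row j)"
      unfolding first_ok_row_def by (rule LeastI)
    with True have "ok j i'"
      using new_row by simp
    then show ?thesis
      using \<open>i' < n\<close> by (auto intro: ok_mono)
  qed (use later new_row in auto)
  with cand' walk k t \<open>i' \<le> i\<close> \<open>i' < n\<close> show ?thesis
    by (simp add: sweep_col_def sweep_inv_def Let_def)
qed

lemma sweep_inv_fold: "j \<le> n \<Longrightarrow> sweep_inv j (fold (sweep_col A B xmin xmax ymin ymax) [0..<j] (None, n - 1, 0))"
proof (induction j)
  case 0
  then show ?case
    using sweep_inv_init by simp
next
  case (Suc j)
  then show ?case
    using sweep_inv_step[of j] by (cases "fold (sweep_col A B xmin xmax ymin ymax) [0..<j] (None, n - 1, 0)") auto
qed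

lemma sweep_inv_final: "sweep_inv n (sweep_state n A B xmin xmax ymin ymax)"
  using sweep_inv_fold[of n] by (simp add: sweep_state_def)

lemma sweep_correct:
  "sweep n A B xmin xmax ymin ymax = min_opt (entries_in_range n A B xmin xmax ymin ymax)"
  using sweep_inv_final by (auto simp: sweep_def sweep_inv_def entries_before_n split: prod.splits)

lemma sweep_time_le: "sweep_time n A B xmin xmax ymin ymax \<le> 3 * n"
  using sweep_inv_final by (auto simp: sweep_time_def sweep_inv_def split: prod.splits)

end

theorem lemma2:
  shows "(\<forall>n A B xmin xmax ymin ymax.
            1 \<le> n \<and> sorted_pareto n A \<and> sorted_pareto n B \<longrightarrow>
            sweep n A B xmin xmax ymin ymax =
              (let S = entries_in_range n A B xmin xmax ymin ymax
               in if S = {} then None else Some (Min S)))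
       \<and> (\<exists>c::nat. \<forall>n A B xmin xmax ymin ymax.
            1 \<le> n \<and> sorted_pareto n A \<and> sorted_pareto n B \<longrightarrow>
            sweep_time n A B xmin xmax ymin ymax \<le> c * n)"
proof (intro conjI allI impI exI)
  fix n A B xmin xmax ymin ymax
  assume "1 \<le> n \<and> sorted_pareto n A \<and> sorted_pareto n B"
  then interpret pareto_sweep n A B xmin xmax ymin ymax
    by unfold_locales auto
  show "sweep n A B xmin xmax ymin ymax =
          (let S = entries_in_range n A B xmin xmax ymin ymax
           in if S = {} then None else Some (Min S))"
    by (simp add: sweep_correct min_opt_def Let_def)
  show "sweep_time n A B xmin xmax ymin ymax \<le> 3 * n"
    by (rule sweep_time_le)
qed

end
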